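(* Let $k:\mathbb{R}^d\to[0,\infty)$ be radial with $\int_{\mathbb{R}^d}k=1$, $|x|^2k\in L^1(\mathbb{R}^d)$ and $\nabla k\in L^1(\mathbb{R}^d)$, and let $\hat k(\xi)=\int_{\mathbb{R}^d}k(x)e^{-2\pi i x\cdot\xi}\mathrm{d} x$. Define $h:\mathbb{R}^d\to\mathbb{R}^d$ by $h(\xi)=\xi\sqrt{\frac{\hat k(0)-\hat k(\xi)}{|\xi|^2}}$ for $\xi\ne0$ and $h(0)=0$. Then $h$ is globally Lipschitz on $\mathbb{R}^d$.
   Context: Under these assumptions $\hat k$ is real and $\hat k(0)-\hat k(\xi)\ge0$ for all $\xi$, so $h$ is well defined. *)

theory Defs
  imports "HOL-Analysis.Analysis"
begin

definition fourier :: "('a::euclidean_space \<Rightarrow> real) \<Rightarrow> 'a \<Rightarrow> complex" where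
  "fourier k \<xi> = (LINT x|lborel. complex_of_real (k x) * cis (- 2 * pi * (x \<bullet> \<xi>)))"

definition test_fun :: "('a::euclidean_space \<Rightarrow> real) \<Rightarrow> ('a \<Rightarrow> 'a \<Rightarrow> real) \<Rightarrow> bool" where
  "test_fun \<phi> D \<longleftrightarrow> (\<forall>x. (\<phi> has_derivative D x) (at x))
      \<and> (\<forall>b\<in>Basis. continuous_on UNIV (\<lambda>x. D x b))
      \<and> compact (closure {x. \<phi> x \<noteq> 0})"

definition weak_gradient :: "('a::euclidean_space \<Rightarrow> real) \<Rightarrow> ('a \<Rightarrow> 'a) \<Rightarrow> bool" where
  "weak_gradient k g \<longleftrightarrow> (\<forall>\<phi> D. test_fun \<phi> D \<longrightarrow>
     (\<forall>b\<in>Basis. (LINT x|lborel. k x * D x b) = - (LINT x|lborel. (g x \<bullet> b) * \<phi> x)))"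

definition hfun :: "('a::euclidean_space \<Rightarrow> real) \<Rightarrow> 'a \<Rightarrow> 'a" where
  "hfun k \<xi> = (if \<xi> = 0 then 0
     else sqrt ((Re (fourier k 0) - Re (fourier k \<xi>)) / (norm \<xi>)\<^sup>2) *\<^sub>R \<xi>)"

end

theory Submission
  imports Defs
begin

text \<open>Because cos 2t = 1 - 2 sin^2 t, Re (hat k 0 - hat k xi) equals
  2 int k(x) sin^2(pi x.xi) dx, twice the squared norm of x |-> sin(pi x.xi) in L^2(k dx).
  Since sin is 1-Lipschitz, this function moves in L^2(k dx) by at most
  pi |xi - eta| (int |x|^2 k)^(1/2) when xi moves to eta, so by the triangle inequality in
  L^2(k dx) the function G xi = (Re (hat k 0 - hat k xi))^(1/2) is Lipschitz, and G 0 = 0.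
  Finally h xi = G xi sgn xi, and a Lipschitz function vanishing at the origin times the
  direction sgn xi is again Lipschitz.\<close>

lemma le_sqrt_mult_if_quadratic_nonneg:
  fixes a b c :: real
  assumes nonneg: "\<And>t. 0 \<le> a + 2 * t * c + t\<^sup>2 * b" and "0 \<le> b"
  shows "c \<le> sqrt a * sqrt b"
proof (cases "b = 0")
  case True
  have "c = 0"
  proof (rule ccontr)
    assume "c \<noteq> 0"
    have "0 \<le> a + 2 * (- (\<bar>a\<bar> + 1) / (2 * c)) * c"
      using nonneg[of "- (\<bar>a\<bar> + 1) / (2 * c)"] True by simp
    also have "\<dots> = a - (\<bar>a\<bar> + 1)"
      using \<open>c \<noteq> 0\<close> by (simp add: field_simps)
    finally show False by linarith
  qed
  then show ?thesis using True by simp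
next
  case False
  then have "0 < b" using \<open>0 \<le> b\<close> by simp
  have "0 \<le> a + 2 * (- c / b) * c + (- c / b)\<^sup>2 * b" by (rule nonneg)
  also have "\<dots> = a - c\<^sup>2 / b" using \<open>0 < b\<close> by (simp add: field_simps power2_eq_square)
  finally have "c\<^sup>2 \<le> a * b" using \<open>0 < b\<close> by (simp add: field_simps)
  then have "sqrt (c\<^sup>2) \<le> sqrt (a * b)" by (rule real_sqrt_le_mono)
  then show ?thesis by (simp add: real_sqrt_mult)
qed

lemma integrable_mult_bounded:
  fixes f b :: "'a \<Rightarrow> real"
  assumes "integrable M f" "b \<in> borel_measurable M" "\<And>x. \<bar>b x\<bar> \<le> B"
  shows "integrable M (\<lambda>x. f x * b x)"
proof (rule Bochner_Integration.integrable_bound)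
  show "integrable M (\<lambda>x. B * \<bar>f x\<bar>)" using assms(1) by simp
  show "(\<lambda>x. f x * b x) \<in> borel_measurable M"
    using assms(1,2) by (simp add: borel_measurable_integrable)
  show "AE x in M. norm (f x * b x) \<le> norm (B * \<bar>f x\<bar>)"
    using assms(3) by (intro AE_I2) (simp add: abs_mult,
      metis abs_ge_zero abs_ge_self mult.commute mult_left_mono order_trans)
qed

lemma integrable_weighted_mult:
  fixes w f g :: "'a \<Rightarrow> real"
  assumes [measurable]: "w \<in> borel_measurable M" "f \<in> borel_measurable M" "g \<in> borel_measurable M"
    and "\<And>x. 0 \<le> w x"
    and "integrable M (\<lambda>x. w x * (f x)\<^sup>2)" "integrable M (\<lambda>x. w x * (g x)\<^sup>2)"
  shows "integrable M (\<lambda>x. w x * (f x * g x))"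
proof (rule Bochner_Integration.integrable_bound)
  show "integrable M (\<lambda>x. w x * (f x)\<^sup>2 + w x * (g x)\<^sup>2)"
    using assms(5,6) by simp
  show "(\<lambda>x. w x * (f x * g x)) \<in> borel_measurable M" by measurable
  show "AE x in M. norm (w x * (f x * g x)) \<le> norm (w x * (f x)\<^sup>2 + w x * (g x)\<^sup>2)"
  proof (intro AE_I2)
    fix x
    have "2 * \<bar>f x * g x\<bar> \<le> (f x)\<^sup>2 + (g x)\<^sup>2"
      using sum_squares_bound[of "\<bar>f x\<bar>" "\<bar>g x\<bar>"] by (simp add: abs_mult mult.assoc)
    then have "\<bar>f x * g x\<bar> \<le> (f x)\<^sup>2 + (g x)\<^sup>2"
      by simp
    then show "norm (w x * (f x * g x)) \<le> norm (w x * (f x)\<^sup>2 + w x * (g x)\<^sup>2)"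
      using assms(4)[of x] by (simp add: abs_mult distrib_left[symmetric] mult_left_mono)
  qed
qed

lemma weighted_Cauchy_Schwarz:
  fixes w f g :: "'a \<Rightarrow> real"
  assumes [measurable]: "w \<in> borel_measurable M" "f \<in> borel_measurable M" "g \<in> borel_measurable M"
    and w: "\<And>x. 0 \<le> w x"
    and f: "integrable M (\<lambda>x. w x * (f x)\<^sup>2)" and g: "integrable M (\<lambda>x. w x * (g x)\<^sup>2)"
  shows "(\<integral>x. w x * (f x * g x) \<partial>M)
    \<le> sqrt (\<integral>x. w x * (f x)\<^sup>2 \<partial>M) * sqrt (\<integral>x. w x * (g x)\<^sup>2 \<partial>M)"
proof (rule le_sqrt_mult_if_quadratic_nonneg)
  have fg: "integrable M (\<lambda>x. w x * (f x * g x))"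
    using integrable_weighted_mult[OF assms] .
  fix t :: real
  have "0 \<le> (\<integral>x. w x * (f x + t * g x)\<^sup>2 \<partial>M)"
    using w by (intro integral_nonneg_AE AE_I2) simp
  also have "\<dots> = (\<integral>x. w x * (f x)\<^sup>2 + 2 * t * (w x * (f x * g x)) + t\<^sup>2 * (w x * (g x)\<^sup>2) \<partial>M)"
    by (simp add: power2_eq_square algebra_simps)
  also have "\<dots> = (\<integral>x. w x * (f x)\<^sup>2 \<partial>M) + 2 * t * (\<integral>x. w x * (f x * g x) \<partial>M)
      + t\<^sup>2 * (\<integral>x. w x * (g x)\<^sup>2 \<partial>M)"
    using f g fg by simp
  finally show "0 \<le> (\<integral>x. w x * (f x)\<^sup>2 \<partial>M) + 2 * t * (\<integral>x. w x * (f x * g x) \<partial>M)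
      + t\<^sup>2 * (\<integral>x. w x * (g x)\<^sup>2 \<partial>M)" .
qed (use w in \<open>intro integral_nonneg_AE AE_I2, simp\<close>)

lemma weighted_Minkowski:
  fixes w f g :: "'a \<Rightarrow> real"
  assumes [measurable]: "w \<in> borel_measurable M" "f \<in> borel_measurable M" "g \<in> borel_measurable M"
    and w: "\<And>x. 0 \<le> w x"
    and f: "integrable M (\<lambda>x. w x * (f x)\<^sup>2)" and g: "integrable M (\<lambda>x. w x * (g x)\<^sup>2)"
  shows "sqrt (\<integral>x. w x * (f x + g x)\<^sup>2 \<partial>M)
    \<le> sqrt (\<integral>x. w x * (f x)\<^sup>2 \<partial>M) + sqrt (\<integral>x. w x * (g x)\<^sup>2 \<partial>M)"
proof -
  define F where "F = (\<integral>x. w x * (f x)\<^sup>2 \<partial>M)"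
  define G where "G = (\<integral>x. w x * (g x)\<^sup>2 \<partial>M)"
  have "0 \<le> F" "0 \<le> G"
    unfolding F_def G_def using w by (auto intro!: integral_nonneg_AE)
  have "(\<integral>x. w x * (f x + g x)\<^sup>2 \<partial>M)
      = (\<integral>x. w x * (f x)\<^sup>2 + 2 * (w x * (f x * g x)) + w x * (g x)\<^sup>2 \<partial>M)"
    by (simp add: power2_eq_square algebra_simps)
  also have "\<dots> = F + 2 * (\<integral>x. w x * (f x * g x) \<partial>M) + G"
    using f g integrable_weighted_mult[OF assms] by (simp add: F_def G_def)
  also have "\<dots> \<le> F + 2 * (sqrt F * sqrt G) + G"
    using weighted_Cauchy_Schwarz[OF assms] by (simp add: F_def G_def)
  also have "\<dots> = (sqrt F + sqrt G)\<^sup>2"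
    using \<open>0 \<le> F\<close> \<open>0 \<le> G\<close> by (simp add: power2_eq_square algebra_simps)
  finally show ?thesis
    using \<open>0 \<le> F\<close> \<open>0 \<le> G\<close> real_sqrt_le_mono by (fastforce simp: F_def G_def)
qed

lemma abs_sin_diff_le: "\<bar>sin x - sin y\<bar> \<le> \<bar>x - y\<bar>" for x y :: real
proof -
  have "\<bar>sin x - sin y\<bar> = 2 * \<bar>sin ((x - y) / 2)\<bar> * \<bar>cos ((x + y) / 2)\<bar>"
    by (simp add: sin_diff_sin abs_mult)
  also have "\<dots> \<le> 2 * \<bar>(x - y) / 2\<bar> * 1"
    by (intro mult_mono abs_sin_x_le_abs_x abs_cos_le_one) auto
  finally show ?thesis by simp
qed

lemma norm_sgn_diff_le:
  fixes x y :: "'a::real_normed_vector"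
  assumes "x \<noteq> 0"
  shows "norm (sgn x - sgn y) \<le> 2 * norm (x - y) / norm x"
proof -
  have "sgn x - sgn y = (x - y) /\<^sub>R norm x + ((norm y - norm x) / norm x) *\<^sub>R sgn y"
  proof (cases "y = 0")
    case False
    have "(x - y) /\<^sub>R norm x + ((norm y - norm x) / norm x) *\<^sub>R sgn y
        = x /\<^sub>R norm x - (1 / norm x - (norm y - norm x) / (norm x * norm y)) *\<^sub>R y"
      by (simp add: sgn_div_norm scaleR_diff_right scaleR_diff_left divide_inverse_commute)
    also have "1 / norm x - (norm y - norm x) / (norm x * norm y) = 1 / norm y"
      using assms False by (simp add: field_simps)
    finally show ?thesis by (simp add: sgn_div_norm divide_inverse_commute)
  qed (simp add: sgn_div_norm divide_inverse_commute)
  then have "norm (sgn x - sgn y)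
      \<le> norm (x - y) / norm x + \<bar>norm y - norm x\<bar> / norm x * norm (sgn y)"
    using norm_triangle_ineq[of "(x - y) /\<^sub>R norm x" "((norm y - norm x) / norm x) *\<^sub>R sgn y"]
    by (simp add: abs_mult divide_inverse_commute)
  also have "\<dots> \<le> norm (x - y) / norm x + norm (x - y) / norm x"
    using norm_triangle_ineq3[of y x]
    by (intro add_left_mono mult_le_one divide_right_mono) 
      (auto simp: norm_sgn norm_minus_commute divide_right_mono)
  finally show ?thesis by simp
qed

lemma lipschitz_on_scaleR_sgn:
  fixes G :: "'a::real_normed_vector \<Rightarrow> real"
  assumes G: "L-lipschitz_on UNIV G" and G0: "G 0 = 0"
  shows "(3 * L)-lipschitz_on UNIV (\<lambda>x. G x *\<^sub>R sgn x)"
proof -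
  have L0: "0 \<le> L" using lipschitz_on_nonneg[OF G] .
  have G_diff: "\<bar>G x - G y\<bar> \<le> L * norm (x - y)" for x y
    using lipschitz_on_normD[OF G] by simp
  have bound: "norm (G x *\<^sub>R sgn x - G y *\<^sub>R sgn y) \<le> 3 * L * norm (x - y)"
    if "x \<noteq> 0" for x y
  proof -
    have "G x *\<^sub>R sgn x - G y *\<^sub>R sgn y = G x *\<^sub>R (sgn x - sgn y) + (G x - G y) *\<^sub>R sgn y"
      by (simp add: algebra_simps)
    then have "norm (G x *\<^sub>R sgn x - G y *\<^sub>R sgn y)
        \<le> \<bar>G x\<bar> * norm (sgn x - sgn y) + \<bar>G x - G y\<bar> * norm (sgn y)"
      by (metis norm_scaleR norm_triangle_ineq)
    also have "\<dots> \<le> (L * norm x) * (2 * norm (x - y) / norm x) + L * norm (x - y) * 1"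
      using G_diff[of x 0] G0 G_diff[of x y] norm_sgn_diff_le[OF that, of y]
      by (intro add_mono mult_mono) (auto simp: norm_sgn)
    also have "\<dots> = 3 * L * norm (x - y)"
      using that by simp
    finally show ?thesis .
  qed
  show ?thesis
  proof (rule lipschitz_onI)
    fix x y :: 'a
    show "dist (G x *\<^sub>R sgn x) (G y *\<^sub>R sgn y) \<le> 3 * L * dist x y"
      using bound[of x y] bound[of y x]
      by (cases "x = 0"; cases "y = 0") (auto simp: dist_norm norm_minus_commute)
  qed (use L0 in simp)
qed

lemma Re_fourier:
  fixes k :: "'a::euclidean_space \<Rightarrow> real"
  assumes "integrable lborel k"
  shows "Re (fourier k \<xi>) = (\<integral>x. k x * cos (2 * pi * (x \<bullet> \<xi>)) \<partial>lborel)"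
proof -
  have "(\<lambda>x. cis (- 2 * pi * (x \<bullet> \<xi>))) \<in> borel_measurable borel"
    by (intro borel_measurable_continuous_onI continuous_intros)
  then have "(\<lambda>x. complex_of_real (k x) * cis (- 2 * pi * (x \<bullet> \<xi>))) \<in> borel_measurable lborel"
    using borel_measurable_integrable[OF assms] by simp
  then have "integrable lborel (\<lambda>x. complex_of_real (k x) * cis (- 2 * pi * (x \<bullet> \<xi>)))"
    by (rule Bochner_Integration.integrable_bound[OF assms]) (auto simp: norm_mult)
  then show ?thesis
    unfolding fourier_def by (subst integral_Re[symmetric]) auto
qed

lemma Re_fourier_zero_minus:
  fixes k :: "'a::euclidean_space \<Rightarrow> real"
  assumes "integrable lborel k"
  shows "Re (fourier k 0) - Re (fourier k \<xi>) = 2 * (\<integral>x. k x * (sin (pi * (x \<bullet> \<xi>)))\<^sup>2 \<partial>lborel)"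
proof -
  have cos_double: "cos (2 * pi * (x \<bullet> \<xi>)) = 1 - 2 * (sin (pi * (x \<bullet> \<xi>)))\<^sup>2" for x
    using cos_double_sin[of "pi * (x \<bullet> \<xi>)"] by (simp add: mult.assoc)
  have "integrable lborel (\<lambda>x. k x * cos (2 * pi * (x \<bullet> \<xi>)))"
    using assms by (rule integrable_mult_bounded[where B = 1]) auto
  then have "Re (fourier k 0) - Re (fourier k \<xi>)
      = (\<integral>x. k x - k x * cos (2 * pi * (x \<bullet> \<xi>)) \<partial>lborel)"
    using assms by (simp add: Re_fourier)
  also have "\<dots> = (\<integral>x. 2 * (k x * (sin (pi * (x \<bullet> \<xi>)))\<^sup>2) \<partial>lborel)"
    unfolding cos_double by (simp add: algebra_simps)
  finally show ?thesis by simp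
qed

lemma sqrt_integral_sin_square_lipschitz:
  fixes k :: "'a::euclidean_space \<Rightarrow> real"
  assumes nonneg: "\<And>x. 0 \<le> k x" and int_k: "integrable lborel k"
    and moment: "integrable lborel (\<lambda>x. (norm x)\<^sup>2 * k x)"
  shows "(pi * sqrt (\<integral>x. (norm x)\<^sup>2 * k x \<partial>lborel))-lipschitz_on UNIV
    (\<lambda>\<xi>. sqrt (\<integral>x. k x * (sin (pi * (x \<bullet> \<xi>)))\<^sup>2 \<partial>lborel))"
proof -
  define m where "m = (\<integral>x. (norm x)\<^sup>2 * k x \<partial>lborel)"
  define s where "s \<xi> x = sin (pi * (x \<bullet> \<xi>))" for \<xi> x :: 'a
  define A where "A \<xi> = sqrt (\<integral>x. k x * (s \<xi> x)\<^sup>2 \<partial>lborel)" for \<xi>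
  have [measurable]: "k \<in> borel_measurable lborel" "s \<xi> \<in> borel_measurable lborel" for \<xi>
    using borel_measurable_integrable[OF int_k] unfolding s_def by auto
  have int_s: "integrable lborel (\<lambda>x. k x * (s \<xi> x)\<^sup>2)" for \<xi>
    using int_k by (rule integrable_mult_bounded[where B = 1]) (auto simp: s_def abs_square_le_1)
  have "0 \<le> m"
    unfolding m_def using nonneg by (intro integral_nonneg_AE AE_I2) simp
  have step: "A \<xi> \<le> A \<eta> + pi * sqrt m * norm (\<xi> - \<eta>)" for \<xi> \<eta>
  proof -
    define c where "c = (pi * norm (\<xi> - \<eta>))\<^sup>2"
    have pointwise: "k x * (s \<xi> x - s \<eta> x)\<^sup>2 \<le> c * ((norm x)\<^sup>2 * k x)" for x
    proof -
      have "\<bar>s \<xi> x - s \<eta> x\<bar> \<le> \<bar>pi * (x \<bullet> \<xi>) - pi * (x \<bullet> \<eta>)\<bar>"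
        unfolding s_def by (rule abs_sin_diff_le)
      also have "\<dots> = pi * \<bar>x \<bullet> (\<xi> - \<eta>)\<bar>"
        by (simp add: inner_diff_right abs_mult flip: right_diff_distrib)
      also have "\<dots> \<le> pi * (norm x * norm (\<xi> - \<eta>))"
        by (intro mult_left_mono Cauchy_Schwarz_ineq2) auto
      finally have "(s \<xi> x - s \<eta> x)\<^sup>2 \<le> (pi * (norm x * norm (\<xi> - \<eta>)))\<^sup>2"
        by (metis abs_ge_zero power2_abs power_mono)
      then show ?thesis
        using nonneg[of x] by (simp add: c_def mult_left_mono algebra_simps)
    qed
    have int_bound: "integrable lborel (\<lambda>x. c * ((norm x)\<^sup>2 * k x))"
      using moment by simp
    have int_diff: "integrable lborel (\<lambda>x. k x * (s \<xi> x - s \<eta> x)\<^sup>2)"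
      by (rule Bochner_Integration.integrable_bound[OF int_bound])
        (use nonneg pointwise in \<open>auto intro: order_trans[OF _ abs_ge_self]\<close>)
    have "(\<integral>x. k x * (s \<xi> x - s \<eta> x)\<^sup>2 \<partial>lborel) \<le> (\<integral>x. c * ((norm x)\<^sup>2 * k x) \<partial>lborel)"
      using int_diff int_bound pointwise by (rule integral_mono)
    also have "\<dots> = c * m"
      by (simp add: m_def)
    finally have "sqrt (\<integral>x. k x * (s \<xi> x - s \<eta> x)\<^sup>2 \<partial>lborel) \<le> sqrt (c * m)"
      by (rule real_sqrt_le_mono)
    also have "\<dots> = pi * sqrt m * norm (\<xi> - \<eta>)"
      by (simp add: c_def real_sqrt_mult)
    finally have "sqrt (\<integral>x. k x * (s \<xi> x - s \<eta> x)\<^sup>2 \<partial>lborel)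
        \<le> pi * sqrt m * norm (\<xi> - \<eta>)" .
    moreover have "A \<xi> \<le> sqrt (\<integral>x. k x * (s \<xi> x - s \<eta> x)\<^sup>2 \<partial>lborel) + A \<eta>"
      using weighted_Minkowski[of k lborel "\<lambda>x. s \<xi> x - s \<eta> x" "s \<eta>"] nonneg int_s int_diff
      by (simp add: A_def)
    ultimately show ?thesis by simp
  qed
  have "(pi * sqrt m)-lipschitz_on UNIV A"
  proof (rule lipschitz_onI)
    fix \<xi> \<eta> :: 'a
    show "dist (A \<xi>) (A \<eta>) \<le> pi * sqrt m * dist \<xi> \<eta>"
      using step[of \<xi> \<eta>] step[of \<eta> \<xi>]
      by (simp add: dist_norm dist_real_def norm_minus_commute)
  qed (use \<open>0 \<le> m\<close> in simp)
  then show ?thesis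
    unfolding A_def s_def m_def .
qed

theorem lemma3p1:
  fixes k :: "'a::euclidean_space \<Rightarrow> real"
  assumes nonneg: "\<And>x. k x \<ge> 0"
    and radial: "\<And>x y. norm x = norm y \<Longrightarrow> k x = k y"
    and int_k: "integrable lborel k"
    and mass: "(LINT x|lborel. k x) = 1"
    and moment: "integrable lborel (\<lambda>x. (norm x)\<^sup>2 * k x)"
    and grad: "\<exists>g. integrable lborel g \<and> weak_gradient k g"
  shows "\<exists>C. C-lipschitz_on UNIV (hfun k)"
proof -
  define G where "G \<xi> = sqrt (Re (fourier k 0) - Re (fourier k \<xi>))" for \<xi>
  have "hfun k \<xi> = G \<xi> *\<^sub>R sgn \<xi>" for \<xi>
    unfolding hfun_def G_def sgn_div_norm real_sqrt_divide by (simp add: divide_inverse)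
  then have "hfun k = (\<lambda>\<xi>. G \<xi> *\<^sub>R sgn \<xi>)" ..
  moreover have "(sqrt 2 * (pi * sqrt (\<integral>x. (norm x)\<^sup>2 * k x \<partial>lborel)))-lipschitz_on UNIV G"
    using lipschitz_on_cmult_real_nonneg[OF sqrt_integral_sin_square_lipschitz[OF nonneg int_k moment]]
    by (simp add: G_def Re_fourier_zero_minus[OF int_k] real_sqrt_mult)
  moreover have "G 0 = 0"
    by (simp add: G_def)
  ultimately show ?thesis
    using lipschitz_on_scaleR_sgn by metis
qed

end
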